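(* Let $k_1,k_2$ be nonnegative integers with $2k_1+k_2\ge 2$. Then for every integer $t$ with $1\le t\le k_1$ there exists a projective linear code $C$ over $\mathbb{Z}_4$ of type $4^{k_1}2^{k_2}$, length $n=2^{2k_1+k_2-1}-2^{2k_1+k_2-t-1}$ and minimum Lee distance $d_L=n$, having exactly two nonzero Lee weights $w_1=2^{2k_1+k_2-1}-2^{2k_1+k_2-t-1}$ and $w_2=2^{2k_1+k_2-1}$, with $A_{w_1}=2^{2k_1+k_2}-2^t$ and $A_{w_2}=2^t-1$.
   Context: A linear code of length $n$ over $\mathbb{Z}_4$ is a $\mathbb{Z}_4$-submodule of $\mathbb{Z}_4^n$; it has type $4^{k_1}2^{k_2}$ if it is isomorphic as a group to $\mathbb{Z}_4^{k_1}\times\mathbb{Z}_2^{k_2}$. The Lee weight on $\mathbb{Z}_4$ is $w_L(0)=0,w_L(1)=1,w_L(2)=2,w_L(3)=1$, extended additively to vectors; $d_L$ is the minimum Lee weight of a nonzero codeword. The dual $C^\perp$ is taken with respect to $\mathbf{x}\cdot\mathbf{y}=\sum x_iy_i\in\mathbb{Z}_4$, and $C$ is projective if $d_L(C^\perp)\ge3$. $A_w$ is the number of codewords of Lee weight $w$. *)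

theory Defs
  imports Main
begin

text \<open>Elements of Z_4 are represented by the integers 0,1,2,3 (residues mod 4).
  A word of length n over Z_4 is a function nat => int with values in {0..3}
  on {0..<n} and value 0 outside {0..<n}.\<close>

definition z4_words :: "nat \<Rightarrow> (nat \<Rightarrow> int) set" where
  "z4_words n = {x. (\<forall>i<n. 0 \<le> x i \<and> x i < 4) \<and> (\<forall>i\<ge>n. x i = 0)}"

definition vadd4 :: "(nat \<Rightarrow> int) \<Rightarrow> (nat \<Rightarrow> int) \<Rightarrow> (nat \<Rightarrow> int)" where
  "vadd4 x y = (\<lambda>i. (x i + y i) mod 4)"

definition smult4 :: "int \<Rightarrow> (nat \<Rightarrow> int) \<Rightarrow> (nat \<Rightarrow> int)" where
  "smult4 a x = (\<lambda>i. (a * x i) mod 4)"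

definition z4_linear_code :: "nat \<Rightarrow> (nat \<Rightarrow> int) set \<Rightarrow> bool" where
  "z4_linear_code n C \<longleftrightarrow> C \<subseteq> z4_words n \<and> (\<lambda>_. 0) \<in> C \<and>
     (\<forall>x\<in>C. \<forall>y\<in>C. vadd4 x y \<in> C) \<and>
     (\<forall>a::int. \<forall>x\<in>C. smult4 a x \<in> C)"

definition type_group :: "nat \<Rightarrow> nat \<Rightarrow> ((nat \<Rightarrow> int) \<times> (nat \<Rightarrow> int)) set" where
  "type_group k1 k2 =
     {(u, v). (\<forall>i<k1. 0 \<le> u i \<and> u i < 4) \<and> (\<forall>i\<ge>k1. u i = 0) \<and>
              (\<forall>i<k2. 0 \<le> v i \<and> v i < 2) \<and> (\<forall>i\<ge>k2. v i = 0)}"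

definition type_add :: "((nat \<Rightarrow> int) \<times> (nat \<Rightarrow> int)) \<Rightarrow> ((nat \<Rightarrow> int) \<times> (nat \<Rightarrow> int))
    \<Rightarrow> ((nat \<Rightarrow> int) \<times> (nat \<Rightarrow> int))" where
  "type_add p q = ((\<lambda>i. (fst p i + fst q i) mod 4), (\<lambda>i. (snd p i + snd q i) mod 2))"

definition has_type :: "(nat \<Rightarrow> int) set \<Rightarrow> nat \<Rightarrow> nat \<Rightarrow> bool" where
  "has_type C k1 k2 \<longleftrightarrow> (\<exists>\<phi>. bij_betw \<phi> C (type_group k1 k2) \<and>
      (\<forall>x\<in>C. \<forall>y\<in>C. \<phi> (vadd4 x y) = type_add (\<phi> x) (\<phi> y)))"

definition lee :: "int \<Rightarrow> nat" where
  "lee a = (if a mod 4 = 0 then 0 else if a mod 4 = 2 then 2 else 1)"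

definition lee_weight :: "nat \<Rightarrow> (nat \<Rightarrow> int) \<Rightarrow> nat" where
  "lee_weight n x = (\<Sum>i<n. lee (x i))"

definition min_lee :: "nat \<Rightarrow> (nat \<Rightarrow> int) set \<Rightarrow> nat" where
  "min_lee n C = Min (lee_weight n ` (C - {\<lambda>_. 0}))"

definition dual_code :: "nat \<Rightarrow> (nat \<Rightarrow> int) set \<Rightarrow> (nat \<Rightarrow> int) set" where
  "dual_code n C = {y \<in> z4_words n. \<forall>x\<in>C. (\<Sum>i<n. x i * y i) mod 4 = 0}"

text \<open>Projective: d_L(C^perp) >= 3, i.e. every nonzero dual codeword has Lee
  weight at least 3 (vacuous if the dual is zero).\<close>
definition projective :: "nat \<Rightarrow> (nat \<Rightarrow> int) set \<Rightarrow> bool" where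
  "projective n C \<longleftrightarrow> (\<forall>y \<in> dual_code n C - {\<lambda>_. 0}. lee_weight n y \<ge> 3)"

definition weight_count :: "nat \<Rightarrow> (nat \<Rightarrow> int) set \<Rightarrow> nat \<Rightarrow> nat" where
  "weight_count n C w = card {x \<in> C. lee_weight n x = w}"

end

theory Submission
  imports Defs "HOL-Number_Theory.Cong" "HOL-Library.FuncSet"
begin

(*
  The code is the image of the encoding g |-> (<c, g>)_(c in S) of G = Z_4^k1 x Z_2^k2, where
  <c, g> = sum c_i g_i + 2 sum c'_i g'_i in Z_4 and the set S of columns contains one element
  of each pair +-c of elements of G having an odd entry among the first t Z_4-coordinates.
  Summing over T = S u -S doubles Lee weights, since <-c, g> = -<c, g>.  Let E be the subgroup
  of elements whose first t coordinates are even, so that T = G - E.  If <h, g> = 2 for some h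
  in E, translation by h permutes T and adds 2 to every <c, g>; as lee y + lee (y + 2) = 2, the
  weight of the codeword of g is |T|/2 = |S|.  Otherwise g lies in the annihilator H of E, of
  order 2^t; then <c, g> vanishes on E, and the same translation argument on all of G, now
  with a unit vector h, gives the weight |G|/2.  The code is projective because every column
  has an entry 1, which excludes dual words of weight 1, and because by nondegeneracy of the
  pairing no two columns differ by a unit factor, which excludes dual words of weight 2.
*)

section \<open>Arithmetic modulo 4 and the Lee weight\<close>

lemma lee_cong: "[x = y] (mod 4) \<Longrightarrow> lee x = lee y"
  by (simp add: lee_def cong_def)

lemma lee_mod_4 [simp]: "lee (x mod 4) = lee x"
  by (simp add: lee_def)

lemma lee_uminus [simp]: "lee (- x) = lee x"
  unfolding lee_def by presburger

lemma lee_add_2: "lee x + lee (x + 2) = 2"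
  unfolding lee_def by presburger

lemma lee_eq_0_iff: "lee x = 0 \<longleftrightarrow> [x = 0] (mod 4)"
  by (simp add: lee_def cong_def)

lemma lee_eq_1_iff: "lee x = 1 \<longleftrightarrow> odd x"
  unfolding lee_def by presburger

lemma even_int_cases_4: "0 \<le> x \<Longrightarrow> x < 4 \<Longrightarrow> even x \<longleftrightarrow> x = 0 \<or> (x::int) = 2"
  by presburger

lemma cong_solve_odd_mod_4:
  fixes a x y :: int
  assumes "odd a" and "[x * a + y = 0] (mod 4)"
  shows "[x = - a * y] (mod 4)"
proof -
  obtain k where "a = 2 * k + 1"
    using assms(1) oddE by blast
  then have "x + a * y = a * (x * a + y) - 4 * (x * (k * k + k))"
    by (simp add: algebra_simps)
  moreover have "4 dvd a * (x * a + y)"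
    using assms(2) by (simp add: cong_0_iff)
  ultimately have "4 dvd x + a * y"
    by simp
  then show ?thesis
    by (simp add: cong_iff_dvd_diff)
qed

lemma sum_lee_shift_by_2:
  assumes "finite X" and \<sigma>: "bij_betw \<sigma> X X"
    and shift: "\<And>x. x \<in> X \<Longrightarrow> [f (\<sigma> x) = f x + 2] (mod 4)"
  shows "(\<Sum>x\<in>X. lee (f x)) = card X"
proof -
  have "(\<Sum>x\<in>X. lee (f x)) = (\<Sum>x\<in>X. lee (f (\<sigma> x)))"
    using sum.reindex_bij_betw[OF \<sigma>, of "\<lambda>x. lee (f x)"] by simp
  also have "\<dots> = (\<Sum>x\<in>X. lee (f x + 2))"
    using shift by (intro sum.cong lee_cong) auto
  finally have "2 * (\<Sum>x\<in>X. lee (f x)) = (\<Sum>x\<in>X. lee (f x) + lee (f x + 2))"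
    by (simp add: sum.distrib)
  also have "\<dots> = 2 * card X"
    by (simp add: lee_add_2)
  finally show ?thesis by simp
qed

section \<open>The group \<open>\<int>\<^sub>4\<^sup>k\<^sup>1 \<times> \<int>\<^sub>2\<^sup>k\<^sup>2\<close>\<close>

definition funs_below :: "nat \<Rightarrow> (nat \<Rightarrow> 'a set) \<Rightarrow> (nat \<Rightarrow> 'a::zero) set" where
  "funs_below k V = {f. (\<forall>i<k. f i \<in> V i) \<and> (\<forall>i\<ge>k. f i = 0)}"

lemma card_funs_below:
  assumes "\<And>i. i < k \<Longrightarrow> finite (V i)"
  shows "card (funs_below k V) = (\<Prod>i<k. card (V i))"
proof -
  have "bij_betw (\<lambda>f. restrict f {..<k}) (funs_below k V) (\<Pi>\<^sub>E i\<in>{..<k}. V i)"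
    by (rule bij_betw_byWitness[where f' = "\<lambda>g i. if i < k then g i else 0"])
      (auto simp: funs_below_def fun_eq_iff PiE_def extensional_def)
  then show ?thesis
    by (simp add: bij_betw_same_card card_PiE)
qed

lemma prod_lessThan_if_less:
  fixes a b :: "'a::comm_monoid_mult"
  assumes "t \<le> k"
  shows "(\<Prod>i<k. if i < t then a else b) = a ^ t * b ^ (k - t)"
proof -
  have "{..<k} \<inter> {i. i < t} = {..<t}" "{..<k} \<inter> - {i. i < t} = {t..<k}"
    using assms by auto
  then show ?thesis
    by (simp add: prod.If_cases)
qed

type_synonym z4z2 = "(nat \<Rightarrow> int) \<times> (nat \<Rightarrow> int)"

definition type_zero :: z4z2 where
  "type_zero = (\<lambda>_. 0, \<lambda>_. 0)"

definition type_scale :: "int \<Rightarrow> z4z2 \<Rightarrow> z4z2" where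
  "type_scale r g = ((\<lambda>i. (r * fst g i) mod 4), (\<lambda>i. (r * snd g i) mod 2))"

definition type_unit4 :: "nat \<Rightarrow> z4z2" where
  "type_unit4 j = ((\<lambda>i. if i = j then 1 else 0), (\<lambda>_. 0))"

definition type_unit2 :: "nat \<Rightarrow> z4z2" where
  "type_unit2 j = ((\<lambda>_. 0), (\<lambda>i. if i = j then 1 else 0))"

lemma type_group_eq_funs_below:
  "type_group k1 k2 = funs_below k1 (\<lambda>_. {0..3}) \<times> funs_below k2 (\<lambda>_. {0..1})"
  by (auto simp: type_group_def funs_below_def)

lemma card_type_group: "card (type_group k1 k2) = 2 ^ (2 * k1 + k2)"
  by (simp add: type_group_eq_funs_below card_funs_below card_cartesian_product
      power_add power_mult)

lemma finite_type_group: "finite (type_group k1 k2)"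
  using card_type_group by (metis card_ge_0_finite zero_less_numeral zero_less_power)

lemma type_group_fst_mod [simp]: "g \<in> type_group k1 k2 \<Longrightarrow> fst g i mod 4 = fst g i"
  by (cases "i < k1") (auto simp: type_group_def)

lemma type_group_snd_mod [simp]: "g \<in> type_group k1 k2 \<Longrightarrow> snd g i mod 2 = snd g i"
  by (cases "i < k2") (auto simp: type_group_def)

lemma type_group_eqI:
  assumes "g \<in> type_group k1 k2" "h \<in> type_group k1 k2"
    and "\<And>i. i < k1 \<Longrightarrow> [fst g i = fst h i] (mod 4)"
    and "\<And>i. i < k2 \<Longrightarrow> [snd g i = snd h i] (mod 2)"
  shows "g = h"
proof -
  have "fst g i = fst h i" "snd g i = snd h i" for i
    using assms by (cases "i < k1"; cases "i < k2"; auto simp: type_group_def cong_def)+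
  then show ?thesis
    by (simp add: prod_eq_iff fun_eq_iff)
qed

lemma type_add_closed:
  "g \<in> type_group k1 k2 \<Longrightarrow> h \<in> type_group k1 k2 \<Longrightarrow> type_add g h \<in> type_group k1 k2"
  by (auto simp: type_group_def type_add_def)

lemma type_scale_closed: "g \<in> type_group k1 k2 \<Longrightarrow> type_scale r g \<in> type_group k1 k2"
  by (auto simp: type_group_def type_scale_def)

lemma type_zero_mem: "type_zero \<in> type_group k1 k2"
  by (simp add: type_group_def type_zero_def)

lemma type_unit4_mem: "j < k1 \<Longrightarrow> type_unit4 j \<in> type_group k1 k2"
  by (auto simp: type_group_def type_unit4_def)

lemma type_unit2_mem: "j < k2 \<Longrightarrow> type_unit2 j \<in> type_group k1 k2"
  by (auto simp: type_group_def type_unit2_def)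

lemma type_add_right_cancel:
  assumes "g \<in> type_group k1 k2" "h \<in> type_group k1 k2" and "type_add g c = type_add h c"
  shows "g = h"
proof (rule type_group_eqI[OF assms(1,2)])
  fix i
  have "[fst g i + fst c i = fst h i + fst c i] (mod 4)" "[snd g i + snd c i = snd h i + snd c i] (mod 2)"
    using assms(3) by (auto simp: type_add_def cong_def dest!: fun_cong)
  then show "[fst g i = fst h i] (mod 4)" "[snd g i = snd h i] (mod 2)"
    by (simp_all add: cong_add_rcancel)
qed

lemma type_add_minus_eq_zero:
  assumes "g \<in> type_group k1 k2" "h \<in> type_group k1 k2"
    and "type_add g (type_scale (-1) h) = type_zero"
  shows "g = h"
proof (rule type_group_eqI[OF assms(1,2)])
  fix i
  have "(fst g i + (- fst h i) mod 4) mod 4 = 0" "(snd g i + (- snd h i) mod 2) mod 2 = 0"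
    using arg_cong[OF assms(3), of "\<lambda>p. fst p i"] arg_cong[OF assms(3), of "\<lambda>p. snd p i"]
    by (simp_all add: type_add_def type_scale_def type_zero_def)
  then show "[fst g i = fst h i] (mod 4)" "[snd g i = snd h i] (mod 2)"
    unfolding cong_def by presburger+
qed

lemma type_scale_1: "g \<in> type_group k1 k2 \<Longrightarrow> type_scale 1 g = g"
  by (simp add: type_scale_def)

lemma type_scale_cong:
  assumes "[r = s] (mod 4)"
  shows "type_scale r g = type_scale s g"
proof -
  have "[r * x = s * x] (mod 4)" "[r * x = s * x] (mod 2)" for x
    using assms cong_dvd_modulus[OF assms, of 2] by (auto intro: cong_scalar_right)
  then show ?thesis
    by (simp add: type_scale_def fun_eq_iff cong_def)
qed

lemma type_scale_scale: "type_scale a (type_scale b g) = type_scale (a * b) g"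
  by (simp add: type_scale_def fun_eq_iff mod_mult_right_eq mult.assoc)

section \<open>The pairing and the weights of the codewords\<close>

locale two_weight_code =
  fixes k1 k2 t :: nat
  assumes t_pos: "1 \<le> t" and t_le_k1: "t \<le> k1"
begin

abbreviation G :: "z4z2 set" where
  "G \<equiv> type_group k1 k2"

text \<open>The \<open>\<int>\<^sub>2\<close>-coordinates enter through the embedding \<open>x \<mapsto> 2x\<close> of \<open>\<int>\<^sub>2\<close> into \<open>\<int>\<^sub>4\<close>.\<close>

definition pairing :: "z4z2 \<Rightarrow> z4z2 \<Rightarrow> int" where
  "pairing c g = (\<Sum>i<k1. fst c i * fst g i) + 2 * (\<Sum>i<k2. snd c i * snd g i)"

definition dot :: "z4z2 \<Rightarrow> z4z2 \<Rightarrow> int" where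
  "dot c g = pairing c g mod 4"

lemma dot_commute: "dot c g = dot g c"
  by (simp add: dot_def pairing_def mult.commute)

lemma dot_range: "0 \<le> dot c g" "dot c g < 4"
  by (simp_all add: dot_def)

lemma dot_lincomb:
  assumes "\<And>i. i < k1 \<Longrightarrow> [fst g i = a * fst g1 i + b * fst g2 i] (mod 4)"
    and "\<And>i. i < k2 \<Longrightarrow> [snd g i = a * snd g1 i + b * snd g2 i] (mod 2)"
  shows "dot c g = (a * dot c g1 + b * dot c g2) mod 4"
proof -
  let ?l1 = "\<lambda>i. a * fst g1 i + b * fst g2 i" and ?l2 = "\<lambda>i. a * snd g1 i + b * snd g2 i"
  have "[(\<Sum>i<k1. fst c i * fst g i) = (\<Sum>i<k1. fst c i * ?l1 i)] (mod 4)"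
    using assms(1) by (intro cong_sum cong_scalar_left) auto
  moreover have "[(\<Sum>i<k2. snd c i * snd g i) = (\<Sum>i<k2. snd c i * ?l2 i)] (mod 2)"
    using assms(2) by (intro cong_sum cong_scalar_left) auto
  then have "[2 * (\<Sum>i<k2. snd c i * snd g i) = 2 * (\<Sum>i<k2. snd c i * ?l2 i)] (mod 4)"
    using cong_cmult_leftI[of _ _ 2 2] by simp
  ultimately have "[pairing c g = (\<Sum>i<k1. fst c i * ?l1 i) + 2 * (\<Sum>i<k2. snd c i * ?l2 i)] (mod 4)"
    unfolding pairing_def by (rule cong_add)
  also have "(\<Sum>i<k1. fst c i * ?l1 i) + 2 * (\<Sum>i<k2. snd c i * ?l2 i)
      = a * pairing c g1 + b * pairing c g2"
    by (simp add: pairing_def algebra_simps sum.distrib sum_distrib_left)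
  also have "[a * pairing c g1 + b * pairing c g2 = a * dot c g1 + b * dot c g2] (mod 4)"
    by (intro cong_add cong_scalar_left) (simp_all add: dot_def cong_def)
  finally show ?thesis
    by (simp add: dot_def cong_def)
qed

lemma dot_type_add_right: "dot c (type_add g h) = (dot c g + dot c h) mod 4"
  using dot_lincomb[of "type_add g h" 1 g 1 h] by (simp add: type_add_def cong_def)

lemma dot_type_scale_right: "dot c (type_scale r g) = (r * dot c g) mod 4"
  using dot_lincomb[of "type_scale r g" r g 0 g] by (simp add: type_scale_def cong_def)

lemma dot_type_add_left: "dot (type_add c h) g = (dot c g + dot h g) mod 4"
  by (metis dot_commute dot_type_add_right)

lemma dot_type_scale_left: "dot (type_scale r c) g = (r * dot c g) mod 4"
  by (metis dot_commute dot_type_scale_right)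

lemma dot_type_zero: "dot c type_zero = 0"
  by (simp add: dot_def pairing_def type_zero_def)

lemma dot_type_unit4:
  assumes "c \<in> G" "j < k1"
  shows "dot c (type_unit4 j) = fst c j"
proof -
  have "pairing c (type_unit4 j) = fst c j"
    using assms(2) by (simp add: pairing_def type_unit4_def if_distrib cong: if_cong)
  then show ?thesis
    using assms(1) by (simp add: dot_def)
qed

lemma dot_type_unit2:
  assumes "c \<in> G" "j < k2"
  shows "dot c (type_unit2 j) = 2 * snd c j"
proof -
  have "pairing c (type_unit2 j) = 2 * snd c j"
    using assms(2) by (simp add: pairing_def type_unit2_def if_distrib cong: if_cong)
  moreover have "snd c j = 0 \<or> snd c j = 1"
    using assms by (auto simp: type_group_def)
  ultimately show ?thesis
    by (auto simp: dot_def)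
qed

lemma dot_nondegenerate:
  assumes "c \<in> G" "c' \<in> G" and "\<And>g. g \<in> G \<Longrightarrow> dot c g = dot c' g"
  shows "c = c'"
proof (rule type_group_eqI[OF assms(1,2)])
  fix i
  show "[fst c i = fst c' i] (mod 4)" if "i < k1"
    using assms(3)[OF type_unit4_mem[OF that]] by (simp add: assms dot_type_unit4 that)
  show "[snd c i = snd c' i] (mod 2)" if "i < k2"
    using assms(3)[OF type_unit2_mem[OF that]] by (simp add: assms dot_type_unit2 that)
qed

text \<open>\<open>S\<close> is the set of columns of the generator matrix: it contains the element of each pair
  \<open>\<plusminus>c\<close> in \<open>T\<close> whose first odd entry is 1.\<close>

definition E :: "z4z2 set" where
  "E = {c \<in> G. \<forall>j<t. even (fst c j)}"

definition T :: "z4z2 set" where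
  "T = G - E"

definition lead :: "z4z2 \<Rightarrow> nat" where
  "lead c = (LEAST j. odd (fst c j))"

definition S :: "z4z2 set" where
  "S = {c \<in> T. fst c (lead c) = 1}"

definition H :: "z4z2 set" where
  "H = {g \<in> G. (\<forall>j<k1. fst g j \<in> (if j < t then {0, 2} else {0})) \<and> (\<forall>j<k2. snd g j = 0)}"

lemma E_subset: "E \<subseteq> G"
  by (auto simp: E_def)

lemma T_subset: "T \<subseteq> G"
  by (auto simp: T_def)

lemma S_subset: "S \<subseteq> T"
  by (auto simp: S_def)

lemma H_subset: "H \<subseteq> G"
  by (auto simp: H_def)

lemma finite_H: "finite H"
  using H_subset finite_type_group by (rule finite_subset)

lemma type_add_T_E:
  assumes "c \<in> T" "h \<in> E"
  shows "type_add c h \<in> T"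
proof -
  have "odd (fst (type_add c h) j) \<longleftrightarrow> odd (fst c j)" if "j < t" for j
    using assms(2) that by (auto simp: E_def type_add_def dvd_mod_iff)
  moreover have "type_add c h \<in> G"
    using assms T_subset E_subset by (auto intro: type_add_closed)
  ultimately show ?thesis
    using assms(1) by (auto simp: T_def E_def)
qed

lemma sum_lee_dot_translation:
  assumes "X \<subseteq> G" "h \<in> G" "\<And>c. c \<in> X \<Longrightarrow> type_add c h \<in> X" and "dot h g = 2"
  shows "(\<Sum>c\<in>X. lee (dot c g)) = card X"
proof (rule sum_lee_shift_by_2)
  show fin: "finite X"
    using assms(1) finite_type_group by (rule finite_subset)
  have "inj_on (\<lambda>c. type_add c h) X"
    using assms(1) by (intro inj_onI) (meson subsetD type_add_right_cancel)
  moreover have "(\<lambda>c. type_add c h) ` X \<subseteq> X"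
    using assms(3) by auto
  ultimately show "bij_betw (\<lambda>c. type_add c h) X X"
    using endo_inj_surj[OF fin] by (simp add: bij_betw_def)
  show "[dot (type_add c h) g = dot c g + 2] (mod 4)" for c
    using assms(4) by (simp add: dot_type_add_left cong_def)
qed

lemma not_in_H_cases:
  assumes "g \<in> G" "g \<notin> H"
  shows "(\<exists>j<k2. snd g j = 1) \<or> (\<exists>j<k1. odd (fst g j)) \<or> (\<exists>j<k1. t \<le> j \<and> fst g j = 2)"
proof (rule ccontr)
  assume none: "\<not> ?thesis"
  have "fst g j \<in> (if j < t then {0, 2} else {0})" if "j < k1" for j
  proof -
    have "even (fst g j)" "0 \<le> fst g j" "fst g j < 4"
      using none assms(1) that by (auto simp: type_group_def)
    then have "fst g j = 0 \<or> fst g j = 2"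
      using even_int_cases_4 by blast
    then show ?thesis
      using none that by auto
  qed
  moreover have "snd g j = 0" if "j < k2" for j
  proof -
    have "0 \<le> snd g j" "snd g j < 2" "snd g j \<noteq> 1"
      using none assms(1) that by (auto simp: type_group_def)
    then show ?thesis
      by linarith
  qed
  ultimately show False
    using assms by (auto simp: H_def)
qed

lemma dot_eq_2_if_not_in_H:
  assumes "g \<in> G" "g \<notin> H"
  obtains h where "h \<in> E" "dot h g = 2"
  using not_in_H_cases[OF assms]
proof (elim disjE exE conjE)
  fix j assume j: "j < k2" "snd g j = 1"
  have "type_unit2 j \<in> E"
    using j by (simp add: E_def type_unit2_mem) (simp add: type_unit2_def)
  moreover have "dot (type_unit2 j) g = 2"
    using j by (simp add: dot_commute[of _ g] dot_type_unit2 assms(1))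
  ultimately show ?thesis
    by (rule that)
next
  fix j assume j: "j < k1" "odd (fst g j)"
  have "type_scale 2 (type_unit4 j) \<in> E"
    using j by (simp add: E_def type_scale_closed type_unit4_mem) (simp add: type_scale_def type_unit4_def)
  moreover have "(2 * fst g j) mod 4 = 2"
    using j(2) by presburger
  then have "dot (type_scale 2 (type_unit4 j)) g = 2"
    using j by (simp add: dot_type_scale_left) (simp add: dot_commute[of _ g] dot_type_unit4 assms(1))
  ultimately show ?thesis
    by (rule that)
next
  fix j assume j: "j < k1" "t \<le> j" "fst g j = 2"
  have "type_unit4 j \<in> E"
    using j by (simp add: E_def type_unit4_mem) (simp add: type_unit4_def)
  moreover have "dot (type_unit4 j) g = 2"
    using j by (simp add: dot_commute[of _ g] dot_type_unit4 assms(1))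
  ultimately show ?thesis
    by (rule that)
qed

lemma sum_lee_dot_T_not_in_H:
  assumes "g \<in> G" "g \<notin> H"
  shows "(\<Sum>c\<in>T. lee (dot c g)) = card T"
proof -
  obtain h where "h \<in> E" "dot h g = 2"
    using dot_eq_2_if_not_in_H assms .
  then show ?thesis
    using T_subset E_subset type_add_T_E by (intro sum_lee_dot_translation) auto
qed

lemma dot_E_H:
  assumes "c \<in> E" "g \<in> H"
  shows "dot c g = 0"
proof -
  have "4 dvd fst c i * fst g i" if "i < k1" for i
  proof (cases "i < t")
    case True
    then have "even (fst c i)" "fst g i = 0 \<or> fst g i = 2"
      using assms that by (auto simp: E_def H_def)
    then show ?thesis
      by auto
  qed (use assms that in \<open>auto simp: H_def\<close>)
  then have "4 dvd (\<Sum>i<k1. fst c i * fst g i)"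
    by (intro dvd_sum) auto
  moreover have "(\<Sum>i<k2. snd c i * snd g i) = 0"
    using assms(2) by (simp add: H_def)
  ultimately show ?thesis
    by (simp add: dot_def pairing_def)
qed

lemma sum_lee_dot_T_in_H:
  assumes "g \<in> H" "g \<noteq> type_zero"
  shows "(\<Sum>c\<in>T. lee (dot c g)) = card G"
proof -
  have gG: "g \<in> G"
    using assms(1) H_subset by auto
  have "\<exists>j<t. fst g j = 2"
  proof (rule ccontr)
    assume "\<not> ?thesis"
    then have "fst g j = 0" if "j < k1" for j
      using assms(1) that by (cases "j < t") (auto simp: H_def)
    then have "g = type_zero"
      using assms(1) by (intro type_group_eqI[OF gG type_zero_mem]) (auto simp: H_def type_zero_def)
    with assms(2) show False ..
  qed
  then obtain j where j: "j < t" "fst g j = 2"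
    by blast
  have "j < k1"
    using j t_le_k1 by simp
  then have "(\<Sum>c\<in>G. lee (dot c g)) = card G"
    using j by (intro sum_lee_dot_translation[where h = "type_unit4 j"])
      (auto simp: type_add_closed type_unit4_mem dot_commute[of _ g] dot_type_unit4 gG)
  moreover have "(\<Sum>c\<in>E. lee (dot c g)) = 0"
    using dot_E_H assms(1) by (simp add: lee_def)
  moreover have "(\<Sum>c\<in>G. lee (dot c g)) = (\<Sum>c\<in>T. lee (dot c g)) + (\<Sum>c\<in>E. lee (dot c g))"
    unfolding T_def using E_subset finite_type_group by (rule sum.subset_diff)
  ultimately show ?thesis
    by simp
qed

lemma odd_fst_type_scale: "odd u \<Longrightarrow> odd (fst (type_scale u c) j) \<longleftrightarrow> odd (fst c j)"
  by (simp add: type_scale_def dvd_mod_iff)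

lemma lead_type_scale: "odd u \<Longrightarrow> lead (type_scale u c) = lead c"
  by (simp add: lead_def odd_fst_type_scale)

lemma type_scale_T: "odd u \<Longrightarrow> c \<in> T \<Longrightarrow> type_scale u c \<in> T"
  by (auto simp: T_def E_def type_scale_closed odd_fst_type_scale)

lemma lead_T:
  assumes "c \<in> T"
  shows "lead c < t" "odd (fst c (lead c))"
proof -
  obtain j where j: "j < t" "odd (fst c j)"
    using assms by (auto simp: T_def E_def)
  show "odd (fst c (lead c))"
    unfolding lead_def using j(2) by (rule LeastI)
  show "lead c < t"
    unfolding lead_def using Least_le[of "\<lambda>j. odd (fst c j)", OF j(2)] j(1) by simp
qed

lemma S_unit_multiple:
  assumes "c \<in> S" "type_scale u c \<in> S" "odd u"
  shows "[u = 1] (mod 4)"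
proof -
  have "fst (type_scale u c) (lead c) = 1"
    using assms(2) lead_type_scale[OF assms(3)] by (simp add: S_def)
  with assms(1) show ?thesis
    by (simp add: S_def type_scale_def cong_def)
qed

lemma S_disjoint_uminus: "S \<inter> type_scale (-1) ` S = {}"
proof -
  have "\<not> [-1 = 1] (mod (4::int))"
    by (simp add: cong_def)
  then show ?thesis
    using S_unit_multiple[of _ "-1"] type_scale_scale[of "-1" "-1"] S_subset T_subset
    by (fastforce simp: type_scale_1)
qed

lemma T_eq_S_Un_uminus: "T = S \<union> type_scale (-1) ` S"
proof
  show "S \<union> type_scale (-1) ` S \<subseteq> T"
    using S_subset type_scale_T[of "-1"] by auto
  show "T \<subseteq> S \<union> type_scale (-1) ` S"
  proof
    fix c assume c: "c \<in> T"
    show "c \<in> S \<union> type_scale (-1) ` S"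
    proof (cases "c \<in> S")
      case False
      have "0 \<le> fst c (lead c)" "fst c (lead c) < 4"
        using c lead_T(1)[OF c] t_le_k1 T_subset by (auto simp: type_group_def)
      with lead_T(2)[OF c] False c have "fst c (lead c) = 3"
        by (auto simp: S_def) presburger
      then have "type_scale (-1) c \<in> S"
        using c type_scale_T[of "-1" c] by (simp add: S_def lead_type_scale) (simp add: type_scale_def)
      moreover have "c = type_scale (-1) (type_scale (-1) c)"
        using c T_subset by (auto simp: type_scale_scale type_scale_1)
      ultimately show ?thesis
        by blast
    qed simp
  qed
qed

lemma finite_S: "finite S"
  using S_subset T_subset finite_type_group by (meson finite_subset)

lemma sum_T_eq_twice_sum_S:
  fixes f :: "z4z2 \<Rightarrow> 'a::comm_semiring_1"
  assumes "\<And>c. c \<in> S \<Longrightarrow> f (type_scale (-1) c) = f c"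
  shows "sum f T = 2 * sum f S"
proof -
  have "inj_on (type_scale (-1)) S"
    using S_subset T_subset
    by (intro inj_on_inverseI[where g = "type_scale (-1)"]) (auto simp: type_scale_scale type_scale_1)
  then have "sum f (type_scale (-1) ` S) = sum f S"
    using assms by (simp add: sum.reindex)
  moreover have "sum f T = sum f S + sum f (type_scale (-1) ` S)"
    unfolding T_eq_S_Un_uminus using finite_S S_disjoint_uminus by (simp add: sum.union_disjoint)
  ultimately show ?thesis
    by (simp add: mult_2)
qed

lemma card_T: "card T = 2 * card S"
  using sum_T_eq_twice_sum_S[of "\<lambda>_. 1 :: nat"] by simp

definition code_weight :: "z4z2 \<Rightarrow> nat" where
  "code_weight g = (\<Sum>c\<in>S. lee (dot c g))"

lemma sum_lee_dot_T: "(\<Sum>c\<in>T. lee (dot c g)) = 2 * code_weight g"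
  unfolding code_weight_def by (rule sum_T_eq_twice_sum_S) (simp add: dot_type_scale_left)

lemma code_weight_not_in_H: "g \<in> G \<Longrightarrow> g \<notin> H \<Longrightarrow> code_weight g = card S"
  using sum_lee_dot_T_not_in_H sum_lee_dot_T card_T by simp

lemma code_weight_in_H: "g \<in> H \<Longrightarrow> g \<noteq> type_zero \<Longrightarrow> 2 * code_weight g = card G"
  using sum_lee_dot_T_in_H sum_lee_dot_T by simp

lemma code_weight_type_zero: "code_weight type_zero = 0"
  by (simp add: code_weight_def dot_type_zero lee_def)

lemma card_E: "card E = 2 ^ (2 * k1 + k2 - t)"
proof -
  have "E = funs_below k1 (\<lambda>i. if i < t then {0, 2} else {0..3}) \<times> funs_below k2 (\<lambda>_. {0..1})"
    unfolding E_def type_group_def funs_below_def using t_le_k1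
    by (auto split: if_splits) (metis even_int_cases_4 order.strict_trans2)+
  moreover have "(\<Prod>i<k1. card (if i < t then {0, 2} else {0..3::int})) = (\<Prod>i<k1. if i < t then 2 else 4)"
    by (intro prod.cong) auto
  ultimately have "card E = 2 ^ t * 4 ^ (k1 - t) * 2 ^ k2"
    using t_le_k1 by (simp add: card_funs_below card_cartesian_product prod_lessThan_if_less)
  also have "\<dots> = 2 ^ (2 * k1 + k2 - t)"
  proof -
    obtain r where r: "k1 = t + r"
      using t_le_k1 le_Suc_ex by blast
    then have "2 * k1 + k2 - t = t + 2 * r + k2"
      by simp
    then show ?thesis
      using r by (simp add: power_add power_mult)
  qed
  finally show ?thesis .
qed

lemma card_H: "card H = 2 ^ t"
proof -
  have "H = funs_below k1 (\<lambda>i. if i < t then {0, 2} else {0}) \<times> funs_below k2 (\<lambda>_. {0})"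
    unfolding H_def type_group_def funs_below_def using t_le_k1 by (auto split: if_splits)
  moreover have "(\<Prod>i<k1. card (if i < t then {0, 2} else {0::int})) = (\<Prod>i<k1. if i < t then 2 else 1)"
    by (intro prod.cong) auto
  ultimately show ?thesis
    using t_le_k1 by (simp add: card_funs_below card_cartesian_product prod_lessThan_if_less)
qed

lemma card_S: "card S = 2 ^ (2 * k1 + k2 - 1) - 2 ^ (2 * k1 + k2 - t - 1)"
proof -
  obtain r where r: "2 * k1 + k2 = t + 1 + r"
    using t_pos t_le_k1 by (metis add.commute le_add_diff_inverse2 trans_le_add1 mult_2 add_le_mono)
  have "card T = card G - card E"
    unfolding T_def using E_subset finite_type_group by (simp add: card_Diff_subset finite_subset)
  then have "2 * card S = 2 ^ (t + 1 + r) - 2 ^ (r + 1)"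
    using card_T card_E r by (simp add: card_type_group)
  also have "\<dots> = 2 * (2 ^ (t + r) - 2 ^ r)"
    by (simp add: diff_mult_distrib2 power_add)
  finally show ?thesis
    using r by simp
qed

lemma type_zero_in_H: "type_zero \<in> H"
  by (simp add: H_def type_zero_mem) (simp add: type_zero_def)

lemma card_S_pos: "0 < card S"
proof -
  have "2 * k1 + k2 - t - 1 < 2 * k1 + k2 - 1"
    using t_pos t_le_k1 by simp
  then show ?thesis
    by (simp add: card_S power_strict_increasing)
qed

lemma card_S_less: "card S < 2 ^ (2 * k1 + k2 - 1)"
  using card_S_pos by (simp add: card_S)

lemma code_weight_in_H_eq:
  assumes "g \<in> H" "g \<noteq> type_zero"
  shows "code_weight g = 2 ^ (2 * k1 + k2 - 1)"
proof -
  have "Suc (2 * k1 + k2 - 1) = 2 * k1 + k2"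
    using t_pos t_le_k1 by simp
  then have "2 ^ (2 * k1 + k2) = 2 * (2 :: nat) ^ (2 * k1 + k2 - 1)"
    by (metis power_Suc)
  then show ?thesis
    using code_weight_in_H[OF assms] by (simp add: card_type_group)
qed

lemma code_weight_pos: "g \<in> G \<Longrightarrow> g \<noteq> type_zero \<Longrightarrow> 0 < code_weight g"
  by (cases "g \<in> H") (simp_all add: code_weight_not_in_H code_weight_in_H_eq card_S_pos)

lemma code_weight_eq_card_S_iff:
  assumes "g \<in> G"
  shows "code_weight g = card S \<longleftrightarrow> g \<notin> H"
proof (cases "g \<in> H")
  case True
  then have "code_weight g \<noteq> card S"
    using code_weight_in_H_eq card_S_less card_S_pos code_weight_type_zero
    by (cases "g = type_zero") auto
  with True show ?thesis
    by simp
qed (simp add: assms code_weight_not_in_H)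

lemma code_weight_eq_half_iff:
  assumes "g \<in> G"
  shows "code_weight g = 2 ^ (2 * k1 + k2 - 1) \<longleftrightarrow> g \<in> H - {type_zero}"
proof (cases "g \<in> H")
  case True
  then show ?thesis
    using code_weight_in_H_eq code_weight_type_zero by (cases "g = type_zero") auto
qed (use assms code_weight_not_in_H card_S_less in auto)

lemma G_minus_H_nonempty: "G - H \<noteq> {}"
proof
  assume "G - H = {}"
  then have "G \<subseteq> H"
    by blast
  then have "card G \<le> card H"
    using H_subset finite_type_group by (intro card_mono) (auto intro: finite_subset)
  moreover have "(2::nat) ^ t < 2 ^ (2 * k1 + k2)"
    using t_pos t_le_k1 by (intro power_strict_increasing) auto
  ultimately show False
    by (simp add: card_type_group card_H)
qed

lemma H_minus_zero_nonempty: "H - {type_zero} \<noteq> {}"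
proof
  assume "H - {type_zero} = {}"
  then have "H \<subseteq> {type_zero}"
    by blast
  then have "card H \<le> card {type_zero}"
    by (intro card_mono) simp_all
  moreover have "(2::nat) ^ 1 \<le> 2 ^ t"
    using t_pos by (intro power_increasing) auto
  ultimately show False
    by (simp add: card_H)
qed

section \<open>The code\<close>

definition col :: "nat \<Rightarrow> z4z2" where
  "col = (SOME f. bij_betw f {..<card S} S)"

lemma bij_col: "bij_betw col {..<card S} S"
proof -
  have "\<exists>f. bij_betw f {..<card S} S"
    using ex_bij_betw_nat_finite[OF finite_S] by (simp add: atLeast0LessThan)
  then show ?thesis
    unfolding col_def by (rule someI_ex)
qed

lemma col_in_S: "p < card S \<Longrightarrow> col p \<in> S"
  using bij_col by (auto simp: bij_betw_def)

definition enc :: "z4z2 \<Rightarrow> nat \<Rightarrow> int" where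
  "enc g = (\<lambda>p. if p < card S then dot (col p) g else 0)"

definition code :: "(nat \<Rightarrow> int) set" where
  "code = enc ` G"

lemma lee_weight_enc: "lee_weight (card S) (enc g) = code_weight g"
proof -
  have "lee_weight (card S) (enc g) = (\<Sum>p<card S. lee (dot (col p) g))"
    unfolding lee_weight_def enc_def by simp
  also have "\<dots> = code_weight g"
    unfolding code_weight_def by (rule sum.reindex_bij_betw[OF bij_col])
  finally show ?thesis .
qed

lemma enc_type_add: "enc (type_add g h) = vadd4 (enc g) (enc h)"
  by (auto simp: enc_def vadd4_def dot_type_add_right)

lemma enc_type_scale: "enc (type_scale r g) = smult4 r (enc g)"
  by (auto simp: enc_def smult4_def dot_type_scale_right)

lemma enc_type_zero: "enc type_zero = (\<lambda>_. 0)"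
  by (simp add: enc_def dot_type_zero fun_eq_iff)

lemma enc_in_z4_words: "enc g \<in> z4_words (card S)"
  by (simp add: z4_words_def enc_def dot_range)

lemma inj_on_enc: "inj_on enc G"
proof (rule inj_onI)
  fix g h assume g: "g \<in> G" and h: "h \<in> G" and eq: "enc g = enc h"
  let ?d = "type_add g (type_scale (-1) h)"
  have "enc ?d = (\<lambda>_. 0)"
    by (simp add: enc_type_add enc_type_scale eq vadd4_def smult4_def mod_add_right_eq)
  then have "code_weight ?d = 0"
    using lee_weight_enc[of ?d] by (simp add: lee_weight_def lee_def)
  moreover have "?d \<in> G"
    using g h by (simp add: type_add_closed type_scale_closed)
  ultimately have "?d = type_zero"
    using code_weight_pos[of ?d] by auto
  then show "g = h"
    using type_add_minus_eq_zero g h by blast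
qed

lemma z4_linear_code_code: "z4_linear_code (card S) code"
  unfolding z4_linear_code_def code_def
proof (intro conjI ballI allI)
  show "enc ` G \<subseteq> z4_words (card S)"
    using enc_in_z4_words by auto
  show "(\<lambda>_. 0) \<in> enc ` G"
    using enc_type_zero type_zero_mem by (metis image_eqI)
next
  fix x y assume "x \<in> enc ` G" "y \<in> enc ` G"
  then obtain g h where "g \<in> G" "h \<in> G" "x = enc g" "y = enc h"
    by blast
  then show "vadd4 x y \<in> enc ` G"
    by (metis enc_type_add image_eqI type_add_closed)
next
  fix a x assume "x \<in> enc ` G"
  then obtain g where "g \<in> G" "x = enc g"
    by blast
  then show "smult4 a x \<in> enc ` G"
    by (metis enc_type_scale image_eqI type_scale_closed)
qed

lemma has_type_code: "has_type code k1 k2"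
  unfolding has_type_def code_def
proof (intro exI conjI ballI)
  show "bij_betw (the_inv_into G enc) (enc ` G) G"
    using inj_on_enc by (rule bij_betw_the_inv_into[OF inj_on_imp_bij_betw])
  fix x y assume "x \<in> enc ` G" "y \<in> enc ` G"
  then obtain g h where "g \<in> G" "h \<in> G" "x = enc g" "y = enc h"
    by blast
  then show "the_inv_into G enc (vadd4 x y) = type_add (the_inv_into G enc x) (the_inv_into G enc y)"
    using the_inv_into_f_f[OF inj_on_enc] by (simp add: type_add_closed flip: enc_type_add)
qed

lemma lee_weight_code_minus_zero:
  "lee_weight (card S) ` (code - {\<lambda>_. 0}) = code_weight ` (G - {type_zero})"
proof -
  have "code - {\<lambda>_. 0} = enc ` (G - {type_zero})"
    using inj_on_image_set_diff[OF inj_on_enc, of G "{type_zero}"] type_zero_mem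
    by (simp add: code_def enc_type_zero)
  then show ?thesis
    by (simp add: image_image lee_weight_enc)
qed

lemma lee_weights_code: "lee_weight (card S) ` (code - {\<lambda>_. 0}) = {card S, 2 ^ (2 * k1 + k2 - 1)}"
  unfolding lee_weight_code_minus_zero
proof (intro equalityI subsetI)
  fix w assume "w \<in> code_weight ` (G - {type_zero})"
  then show "w \<in> {card S, 2 ^ (2 * k1 + k2 - 1)}"
    using code_weight_eq_card_S_iff code_weight_eq_half_iff by auto
next
  obtain g where g: "g \<in> G - H"
    using G_minus_H_nonempty by blast
  obtain h where h: "h \<in> H - {type_zero}"
    using H_minus_zero_nonempty by blast
  have "card S = code_weight g"
    using g code_weight_eq_card_S_iff[of g] by simp
  moreover have "2 ^ (2 * k1 + k2 - 1) = code_weight h"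
    using h by (simp add: code_weight_in_H_eq)
  moreover have "g \<in> G - {type_zero}" "h \<in> G - {type_zero}"
    using g h H_subset type_zero_in_H by auto
  ultimately show "w \<in> code_weight ` (G - {type_zero})" if "w \<in> {card S, 2 ^ (2 * k1 + k2 - 1)}" for w
    using that by blast
qed

lemma min_lee_code: "min_lee (card S) code = card S"
  using card_S_less by (simp add: min_lee_def lee_weights_code)

lemma weight_count_code: "weight_count (card S) code w = card {g \<in> G. code_weight g = w}"
proof -
  have "{x \<in> code. lee_weight (card S) x = w} = enc ` {g \<in> G. code_weight g = w}"
    by (auto simp: code_def lee_weight_enc)
  moreover have "inj_on enc {g \<in> G. code_weight g = w}"
    using inj_on_enc by (rule inj_on_subset) auto
  ultimately show ?thesis
    by (simp add: weight_count_def card_image)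
qed

lemma weight_count_card_S: "weight_count (card S) code (card S) = 2 ^ (2 * k1 + k2) - 2 ^ t"
proof -
  have "{g \<in> G. code_weight g = card S} = G - H"
    using code_weight_eq_card_S_iff by auto
  then show ?thesis
    using H_subset finite_H by (simp add: weight_count_code card_Diff_subset card_type_group card_H)
qed

lemma weight_count_half:
  "weight_count (card S) code (2 ^ (2 * k1 + k2 - 1)) = 2 ^ t - 1"
proof -
  have "{g \<in> G. code_weight g = 2 ^ (2 * k1 + k2 - 1)} = H - {type_zero}"
    using code_weight_eq_half_iff H_subset by auto
  then show ?thesis
    using finite_H type_zero_in_H by (simp add: weight_count_code card_H)
qed

lemma col_dot_unit:
  assumes "p < card S"
  shows "type_unit4 (lead (col p)) \<in> G" "dot (col p) (type_unit4 (lead (col p))) = 1"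
proof -
  have "col p \<in> S" "col p \<in> G"
    using col_in_S[OF assms] S_subset T_subset by auto
  moreover have "lead (col p) < k1"
    using lead_T(1) \<open>col p \<in> S\<close> S_subset t_le_k1 by fastforce
  ultimately show "type_unit4 (lead (col p)) \<in> G" "dot (col p) (type_unit4 (lead (col p))) = 1"
    by (simp_all add: type_unit4_mem dot_type_unit4 S_def)
qed

lemma col_eq_if_unit_combination_vanishes:
  assumes "p < card S" "q < card S" "odd a" "odd b"
    and "\<And>g. g \<in> G \<Longrightarrow> [dot (col p) g * a + dot (col q) g * b = 0] (mod 4)"
  shows "p = q"
proof -
  let ?u = "- a * b"
  have S: "col p \<in> S" "col q \<in> S"
    using assms(1,2) col_in_S by auto
  then have G: "col p \<in> G" "col q \<in> G"
    using S_subset T_subset by auto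
  have "dot (col p) g = dot (type_scale ?u (col q)) g" if "g \<in> G" for g
  proof -
    have "[dot (col p) g = ?u * dot (col q) g] (mod 4)"
      using cong_solve_odd_mod_4[OF assms(3) assms(5)[OF that]] by (simp add: algebra_simps)
    then show ?thesis
      by (simp add: dot_type_scale_left cong_def) (simp add: dot_def)
  qed
  then have cp: "col p = type_scale ?u (col q)"
    using G by (intro dot_nondegenerate) (auto simp: type_scale_closed)
  moreover have "odd ?u"
    using assms(3,4) by simp
  ultimately have "[?u = 1] (mod 4)"
    using S S_unit_multiple by metis
  then have "col p = col q"
    using cp type_scale_cong[of ?u 1 "col q"] type_scale_1[OF G(2)] by simp
  then show "p = q"
    using bij_col assms(1,2) by (auto simp: bij_betw_def inj_on_def)
qed

definition word_support :: "(nat \<Rightarrow> int) \<Rightarrow> nat set" where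
  "word_support y = {p \<in> {..<card S}. y p \<noteq> 0}"

lemma lee_weight_eq_sum_word_support: "lee_weight (card S) y = (\<Sum>p\<in>word_support y. lee (y p))"
  unfolding lee_weight_def word_support_def by (rule sum.mono_neutral_right) (auto simp: lee_def)

lemma one_le_lee_word_support:
  assumes "y \<in> z4_words (card S)" "p \<in> word_support y"
  shows "1 \<le> lee (y p)"
proof -
  have "0 \<le> y p" "y p < 4" "y p \<noteq> 0"
    using assms by (auto simp: z4_words_def word_support_def)
  then show ?thesis
    using lee_eq_0_iff[of "y p"] by (auto simp: cong_def)
qed

lemma dual_code_cong_zero:
  assumes "y \<in> dual_code (card S) code" "g \<in> G"
  shows "[(\<Sum>p\<in>word_support y. dot (col p) g * y p) = 0] (mod 4)"
proof -
  have "(\<Sum>p<card S. enc g p * y p) mod 4 = 0"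
    using assms by (auto simp: dual_code_def code_def)
  moreover have "(\<Sum>p<card S. enc g p * y p) = (\<Sum>p<card S. dot (col p) g * y p)"
    by (rule sum.cong) (simp_all add: enc_def)
  moreover have "\<dots> = (\<Sum>p\<in>word_support y. dot (col p) g * y p)"
    by (rule sum.mono_neutral_right) (auto simp: word_support_def)
  ultimately show ?thesis
    by (simp add: cong_def)
qed

lemma projective_code: "projective (card S) code"
  unfolding projective_def
proof
  fix y assume y: "y \<in> dual_code (card S) code - {\<lambda>_. 0}"
  let ?P = "word_support y"
  have words: "y \<in> z4_words (card S)"
    using y by (simp add: dual_code_def)
  have "?P \<noteq> {}"
    using y words by (auto simp: word_support_def z4_words_def fun_eq_iff) (metis not_le)
  then have "1 \<le> card ?P"
    by (simp add: word_support_def Suc_le_eq card_gt_0_iff)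
  moreover have card_le: "card ?P \<le> lee_weight (card S) y"
    using sum_mono[of ?P "\<lambda>_. 1" "\<lambda>p. lee (y p)"] one_le_lee_word_support[OF words]
    by (simp add: lee_weight_eq_sum_word_support)
  ultimately consider "card ?P = 1" | "card ?P = 2" | "3 \<le> lee_weight (card S) y"
    by linarith
  then show "3 \<le> lee_weight (card S) y"
  proof cases
    case 1
    then obtain p where P: "?P = {p}"
      by (rule card_1_singletonE)
    then have p: "p < card S" "0 \<le> y p" "y p < 4" "y p \<noteq> 0"
      using words by (auto simp: word_support_def z4_words_def)
    have "[dot (col p) (type_unit4 (lead (col p))) * y p = 0] (mod 4)"
      using dual_code_cong_zero[of y, OF _ col_dot_unit(1)[OF p(1)]] y P by simp
    with p show ?thesis
      by (simp add: col_dot_unit(2) cong_def)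
  next
    case 2
    then obtain p q where P: "?P = {p, q}" "p \<noteq> q"
      by (meson card_2_iff)
    then have pq: "p < card S" "q < card S"
      by (auto simp: word_support_def)
    show ?thesis
    proof (rule ccontr)
      assume "\<not> ?thesis"
      then have "lee (y p) + lee (y q) \<le> 2"
        using P by (simp add: lee_weight_eq_sum_word_support)
      moreover have "1 \<le> lee (y p)" "1 \<le> lee (y q)"
        using one_le_lee_word_support[OF words] P by auto
      ultimately have "odd (y p)" "odd (y q)"
        by (simp_all flip: lee_eq_1_iff)
      moreover have "[dot (col p) g * y p + dot (col q) g * y q = 0] (mod 4)" if "g \<in> G" for g
        using dual_code_cong_zero[of y g] y that P by simp
      ultimately have "p = q"
        using pq by (intro col_eq_if_unit_combination_vanishes)
      with P(2) show False ..
    qed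
  qed
qed

end

theorem theorem5p7:
  fixes k1 k2 t :: nat
  assumes "2 * k1 + k2 \<ge> 2" and "1 \<le> t" and "t \<le> k1"
  shows "\<exists>C. let n = 2 ^ (2 * k1 + k2 - 1) - 2 ^ (2 * k1 + k2 - t - 1);
                 w1 = 2 ^ (2 * k1 + k2 - 1) - 2 ^ (2 * k1 + k2 - t - 1);
                 w2 = 2 ^ (2 * k1 + k2 - 1)
             in z4_linear_code n C \<and> has_type C k1 k2 \<and> projective n C \<and>
                min_lee n C = n \<and>
                lee_weight n ` (C - {\<lambda>_. 0}) = {w1, w2} \<and> w1 \<noteq> w2 \<and>
                weight_count n C w1 = 2 ^ (2 * k1 + k2) - 2 ^ t \<and>
                weight_count n C w2 = 2 ^ t - 1"
proof -
  \<comment> \<open>the hypothesis \<open>2 * k1 + k2 \<ge> 2\<close> follows from the other two\<close>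
  interpret two_weight_code k1 k2 t
    using assms(2,3) by unfold_locales
  show ?thesis
    unfolding Let_def card_S[symmetric]
    by (intro exI[of _ code] conjI z4_linear_code_code has_type_code projective_code min_lee_code
        lee_weights_code weight_count_card_S weight_count_half) (use card_S_less in simp)
qed

end
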